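(* Let $Ab_0$ denote the class of all finite abelian groups, and define $f:Ab_0\to(0,\infty)$ by $f(G)=\frac{|\mathrm{Aut}(G)|}{|G|}$, where $\mathrm{Aut}(G)$ is the automorphism group of $G$. Then the set $\mathrm{Im}(f)=\{f(G)\mid G\in Ab_0\}$ is dense in $[0,\infty)$. *)

theory Defs
  imports "HOL-Analysis.Analysis" "HOL-Algebra.Bij"
begin

definition aut_ratio :: "('a, 'b) monoid_scheme \<Rightarrow> real" where
  "aut_ratio G = real (card (auto G)) / real (card (carrier G))"

end

(*
  The elementary abelian group (Z/2)^k has at least k! automorphisms (permute the coordinates), so
  its ratio L_k = |Aut|/|G| is at least k!/2^k and thus unbounded. For odd n every automorphism of
  (Z/2)^k x Z/n preserves both factors, because homomorphisms between groups of coprime order are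
  trivial; hence the product has ratio L_k * phi(n)/n. Finally phi(n)/n is dense in [0,1] along odd
  squarefree n: multiplying in the factors 1 - 1/p for the primes p > M one at a time lowers the
  product by less than 1/M per step, and the product tends to 0 since the inverse Euler product over
  the primes up to N dominates the harmonic number H_N. So every x > 0 is approximated by choosing
  L_k > x and phi(n)/n close to x/L_k, and 0 is a limit of such x.
*)

theory Submission
  imports Defs "HOL-Number_Theory.Number_Theory"
begin

section \<open>Automorphism counts and isomorphisms\<close>

lemma auto_iff_iso_extensional:
  "a \<in> auto G \<longleftrightarrow> a \<in> iso G G \<and> a \<in> extensional (carrier G)"
  by (auto simp: auto_def iso_def Bij_def)

lemma (in group) restrict_iso_in_auto:
  assumes "f \<in> iso G G"
  shows "restrict f (carrier G) \<in> auto G"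
  using iso_eq[OF assms] by (simp add: auto_iff_iso_extensional)

lemma conj_iso_in_auto:
  assumes G: "group G" and H: "group H" and h: "h \<in> iso G H"
  shows "(\<lambda>a. restrict (h \<circ> a \<circ> inv_into (carrier G) h) (carrier H)) ` auto G \<subseteq> auto H"
    and "inj_on (\<lambda>a. restrict (h \<circ> a \<circ> inv_into (carrier G) h) (carrier H)) (auto G)"
proof -
  interpret G: group G by (rule G)
  let ?h' = "inv_into (carrier G) h"
  have h': "?h' \<in> iso H G" by (rule G.iso_set_sym[OF h])
  show "(\<lambda>a. restrict (h \<circ> a \<circ> ?h') (carrier H)) ` auto G \<subseteq> auto H"
  proof safe
    fix a assume "a \<in> auto G"
    then have "h \<circ> a \<circ> ?h' \<in> iso H H"
      using h h' by (auto simp: auto_iff_iso_extensional intro: iso_set_trans)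
    then show "restrict (h \<circ> a \<circ> ?h') (carrier H) \<in> auto H"
      by (rule group.restrict_iso_in_auto[OF H])
  qed
  show "inj_on (\<lambda>a. restrict (h \<circ> a \<circ> ?h') (carrier H)) (auto G)"
  proof (rule inj_onI)
    fix a b assume a: "a \<in> auto G" and b: "b \<in> auto G"
      and eq: "restrict (h \<circ> a \<circ> ?h') (carrier H) = restrict (h \<circ> b \<circ> ?h') (carrier H)"
    show "a = b"
    proof (rule extensionalityI)
      fix x assume x: "x \<in> carrier G"
      have hx: "h x \<in> carrier H" "?h' (h x) = x"
        using h x by (auto simp: iso_def hom_def bij_betw_def)
      have "h (a x) = h (b x)" using fun_cong[OF eq, of "h x"] hx by simp
      moreover have "a x \<in> carrier G" "b x \<in> carrier G"
        using a b x by (auto simp: auto_def hom_def)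
      ultimately show "a x = b x"
        using h by (auto simp: iso_def bij_betw_def dest: inj_onD)
    qed (use a b in \<open>simp_all add: auto_iff_iso_extensional\<close>)
  qed
qed

lemma card_auto_iso:
  assumes "group G" "group H" "h \<in> iso G H"
  shows "card (auto G) = card (auto H)"
proof -
  have "inv_into (carrier G) h \<in> iso H G"
    using assms by (simp add: group.iso_set_sym)
  then obtain f where "bij_betw f (auto G) (auto H)"
    using Schroeder_Bernstein conj_iso_in_auto assms by metis
  then show ?thesis by (rule bij_betw_same_card)
qed

lemma aut_ratio_iso:
  assumes "group G" "group H" "h \<in> iso G H"
  shows "aut_ratio G = aut_ratio H"
  using card_auto_iso[OF assms] iso_same_card[OF is_isoI[OF assms(3)]]
  by (simp add: aut_ratio_def)

definition transport_group :: "('a \<Rightarrow> 'b) \<Rightarrow> ('a, 'c) monoid_scheme \<Rightarrow> 'b monoid" where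
  "transport_group e G =
     \<lparr>carrier = e ` carrier G,
      mult = (\<lambda>x y. e (inv_into (carrier G) e x \<otimes>\<^bsub>G\<^esub> inv_into (carrier G) e y)),
      one = e \<one>\<^bsub>G\<^esub>\<rparr>"

lemma transport_group_iso:
  assumes "group G" "inj_on e (carrier G)"
  shows "e \<in> iso G (transport_group e G)"
  using assms by (intro isoI) (auto simp: hom_def bij_betw_def transport_group_def)

lemma comm_group_transport_group:
  assumes "comm_group G" "inj_on e (carrier G)"
  shows "comm_group (transport_group e G)"
  using comm_group.iso_imp_img_comm_group[OF assms(1)
      transport_group_iso[OF comm_group.axioms(2)[OF assms(1)] assms(2)]]
  by (simp add: transport_group_def)

lemma ex_nat_group_same_aut_ratio:
  assumes "comm_group G" "finite (carrier G)"
  shows "\<exists>G' :: nat monoid. comm_group G' \<and> finite (carrier G') \<and> aut_ratio G' = aut_ratio G"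
proof -
  define e where "e = to_nat_on (carrier G)"
  have e: "inj_on e (carrier G)" unfolding e_def using assms(2) by (intro inj_on_to_nat_on countable_finite)
  have "comm_group (transport_group e G)" by (rule comm_group_transport_group[OF assms(1) e])
  moreover have "aut_ratio (transport_group e G) = aut_ratio G"
    using aut_ratio_iso[OF comm_group.axioms(2)[OF assms(1)] comm_group.axioms(2)[OF calculation]
        transport_group_iso[OF comm_group.axioms(2)[OF assms(1)] e]]
    by simp
  moreover have "finite (carrier (transport_group e G))"
    using assms(2) by (simp add: transport_group_def)
  ultimately show ?thesis by blast
qed

section \<open>Direct products of groups of coprime order\<close>

lemma hom_trivial_if_coprime_orders:
  assumes H: "group H" and K: "group K" and coprime: "coprime (order H) (order K)"
    and f: "f \<in> hom H K" and x: "x \<in> carrier H"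
  shows "f x = \<one>\<^bsub>K\<^esub>"
proof -
  interpret H: group H by (rule H)
  interpret K: group K by (rule K)
  have fx: "f x \<in> carrier K" using f x by (auto simp: hom_def)
  have "f x [^]\<^bsub>K\<^esub> order H = f (x [^]\<^bsub>H\<^esub> order H)"
    using hom_nat_pow[OF f x H K] by simp
  also have "\<dots> = \<one>\<^bsub>K\<^esub>" using H.pow_order_eq_1[OF x] hom_one[OF f H K] by simp
  finally have "K.ord (f x) dvd order H" using K.pow_eq_id[OF fx] by simp
  moreover have "K.ord (f x) dvd order K" by (rule K.ord_dvd_group_order[OF fx])
  ultimately have "is_unit (K.ord (f x))" using coprime coprime_common_divisor by blast
  then show ?thesis using K.ord_eq_1[OF fx] by simp
qed

lemma DirProd_endo_preserves_factors:
  assumes H: "group H" and K: "group K" and coprime: "coprime (order H) (order K)"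
    and a: "a \<in> hom (H \<times>\<times> K) (H \<times>\<times> K)"
  shows "h \<in> carrier H \<Longrightarrow> snd (a (h, \<one>\<^bsub>K\<^esub>)) = \<one>\<^bsub>K\<^esub>"
    and "k \<in> carrier K \<Longrightarrow> fst (a (\<one>\<^bsub>H\<^esub>, k)) = \<one>\<^bsub>H\<^esub>"
proof -
  interpret H: group H by (rule H)
  interpret K: group K by (rule K)
  have inl: "(\<lambda>h. (h, \<one>\<^bsub>K\<^esub>)) \<in> hom H (H \<times>\<times> K)"
    and inr: "(\<lambda>k. (\<one>\<^bsub>H\<^esub>, k)) \<in> hom K (H \<times>\<times> K)"
    by (auto intro!: homI)
  have fst: "fst \<in> hom (H \<times>\<times> K) H" and snd: "snd \<in> hom (H \<times>\<times> K) K"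
    by (auto intro!: homI)
  show "snd (a (h, \<one>\<^bsub>K\<^esub>)) = \<one>\<^bsub>K\<^esub>" if h: "h \<in> carrier H"
    using hom_trivial_if_coprime_orders[OF H K coprime hom_compose[OF inl hom_compose[OF a snd]] h]
    by simp
  show "fst (a (\<one>\<^bsub>H\<^esub>, k)) = \<one>\<^bsub>H\<^esub>" if k: "k \<in> carrier K"
    using hom_trivial_if_coprime_orders[OF K H coprime[unfolded coprime_commute[of "order H"]]
        hom_compose[OF inr hom_compose[OF a fst]] k]
    by simp
qed

lemma DirProd_endo_eq_pair:
  assumes H: "group H" and K: "group K" and coprime: "coprime (order H) (order K)"
    and a: "a \<in> hom (H \<times>\<times> K) (H \<times>\<times> K)" and h: "h \<in> carrier H" and k: "k \<in> carrier K"
  shows "a (h, k) = (fst (a (h, \<one>\<^bsub>K\<^esub>)), snd (a (\<one>\<^bsub>H\<^esub>, k)))"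
proof -
  interpret H: group H by (rule H)
  interpret K: group K by (rule K)
  have closed: "a (h, \<one>\<^bsub>K\<^esub>) \<in> carrier H \<times> carrier K"
    "a (\<one>\<^bsub>H\<^esub>, k) \<in> carrier H \<times> carrier K"
    using hom_in_carrier[OF a] h k by auto
  have "a (h, k) = a ((h, \<one>\<^bsub>K\<^esub>) \<otimes>\<^bsub>H \<times>\<times> K\<^esub> (\<one>\<^bsub>H\<^esub>, k))"
    using h k by simp
  also have "\<dots> = a (h, \<one>\<^bsub>K\<^esub>) \<otimes>\<^bsub>H \<times>\<times> K\<^esub> a (\<one>\<^bsub>H\<^esub>, k)"
    using h k by (intro hom_mult[OF a]) simp_all
  also have "\<dots> = (fst (a (h, \<one>\<^bsub>K\<^esub>)), snd (a (\<one>\<^bsub>H\<^esub>, k)))"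
    using DirProd_endo_preserves_factors[OF H K coprime a] h k closed by (simp add: mult_DirProd' mem_Times_iff)
  finally show ?thesis .
qed

lemma auto_induced_on_retract:
  assumes H: "group H" and fin: "finite (carrier H)" and a: "a \<in> auto G"
    and i: "i \<in> hom H G" and p: "p \<in> hom G H"
    and retract: "\<And>x. x \<in> carrier H \<Longrightarrow> p (i x) = x"
    and invariant: "\<And>x. x \<in> carrier H \<Longrightarrow> i (p (a (i x))) = a (i x)"
  shows "restrict (p \<circ> a \<circ> i) (carrier H) \<in> auto H"
proof -
  have ah: "a \<in> hom G G" and inj_a: "inj_on a (carrier G)"
    using a by (auto simp: auto_def Bij_def bij_betw_def)
  have hom: "p \<circ> a \<circ> i \<in> hom H H" using i ah p by (intro hom_compose)
  have inj: "inj_on (p \<circ> a \<circ> i) (carrier H)"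
  proof (rule inj_onI)
    fix x y assume xy: "x \<in> carrier H" "y \<in> carrier H" "(p \<circ> a \<circ> i) x = (p \<circ> a \<circ> i) y"
    then have "a (i x) = a (i y)" using invariant by (metis comp_apply)
    then have "i x = i y" using inj_a hom_in_carrier[OF i] xy by (auto dest: inj_onD)
    then show "x = y" using retract xy by metis
  qed
  have "(p \<circ> a \<circ> i) ` carrier H \<subseteq> carrier H" using hom_carrier[OF hom] by simp
  then have "bij_betw (p \<circ> a \<circ> i) (carrier H) (carrier H)"
    using endo_inj_surj[OF fin _ inj] inj by (simp add: bij_betw_def)
  then show ?thesis
    using group.hom_restrict[OF H hom] by (simp add: auto_def Bij_def bij_betw_def inj_on_def)
qed

definition prod_auto ::
    "('a, 'b) monoid_scheme \<Rightarrow> ('c, 'd) monoid_scheme \<Rightarrow>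
      ('a \<Rightarrow> 'a) \<Rightarrow> ('c \<Rightarrow> 'c) \<Rightarrow> 'a \<times> 'c \<Rightarrow> 'a \<times> 'c"
  where "prod_auto H K b c = restrict (\<lambda>(h, k). (b h, c k)) (carrier H \<times> carrier K)"

lemma prod_auto_in_auto:
  assumes "group H" "group K" "b \<in> auto H" "c \<in> auto K"
  shows "prod_auto H K b c \<in> auto (H \<times>\<times> K)"
proof -
  have "(\<lambda>(h, k). (b h, c k)) \<in> iso (H \<times>\<times> K) (H \<times>\<times> K)"
    using assms by (simp add: iso_paired2 auto_iff_iso_extensional)
  then show ?thesis
    using group.restrict_iso_in_auto[OF DirProd_group[OF assms(1,2)]] by (simp add: prod_auto_def)
qed

lemma inj_on_prod_auto:
  assumes "group H" "group K"
  shows "inj_on (\<lambda>(b, c). prod_auto H K b c) (auto H \<times> auto K)"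
proof (rule inj_onI, clarify)
  interpret H: group H by fact
  interpret K: group K by fact
  fix b c b' c' assume bc: "b \<in> auto H" "c \<in> auto K" "b' \<in> auto H" "c' \<in> auto K"
    and eq: "prod_auto H K b c = prod_auto H K b' c'"
  have "b = b'"
  proof (rule extensionalityI[of _ "carrier H"])
    fix h assume "h \<in> carrier H"
    then show "b h = b' h" using fun_cong[OF eq, of "(h, \<one>\<^bsub>K\<^esub>)"] by (simp add: prod_auto_def)
  qed (use bc in \<open>simp_all add: auto_iff_iso_extensional\<close>)
  moreover have "c = c'"
  proof (rule extensionalityI[of _ "carrier K"])
    fix k assume "k \<in> carrier K"
    then show "c k = c' k" using fun_cong[OF eq, of "(\<one>\<^bsub>H\<^esub>, k)"] by (simp add: prod_auto_def)
  qed (use bc in \<open>simp_all add: auto_iff_iso_extensional\<close>)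
  ultimately show "b = b' \<and> c = c'" by simp
qed

lemma auto_DirProd_coprime_eq_prod_auto:
  assumes H: "group H" "finite (carrier H)" and K: "group K" "finite (carrier K)"
    and coprime: "coprime (order H) (order K)" and a: "a \<in> auto (H \<times>\<times> K)"
  obtains b c where "b \<in> auto H" "c \<in> auto K" "a = prod_auto H K b c"
proof -
  interpret H: group H by (rule H)
  interpret K: group K by (rule K)
  have homs: "(\<lambda>h. (h, \<one>\<^bsub>K\<^esub>)) \<in> hom H (H \<times>\<times> K)"
    "(\<lambda>k. (\<one>\<^bsub>H\<^esub>, k)) \<in> hom K (H \<times>\<times> K)" "fst \<in> hom (H \<times>\<times> K) H" "snd \<in> hom (H \<times>\<times> K) K"
    by (auto intro!: homI)
  have a_hom: "a \<in> hom (H \<times>\<times> K) (H \<times>\<times> K)" using a by (simp add: auto_def)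
  note factors = DirProd_endo_preserves_factors[OF H(1) K(1) coprime a_hom]
  define b where "b = restrict (fst \<circ> a \<circ> (\<lambda>h. (h, \<one>\<^bsub>K\<^esub>))) (carrier H)"
  define c where "c = restrict (snd \<circ> a \<circ> (\<lambda>k. (\<one>\<^bsub>H\<^esub>, k))) (carrier K)"
  have "b \<in> auto H" unfolding b_def
    using H a homs(1,3) by (rule auto_induced_on_retract) (simp_all add: prod_eq_iff factors)
  moreover have "c \<in> auto K" unfolding c_def
    using K a homs(2,4) by (rule auto_induced_on_retract) (simp_all add: prod_eq_iff factors)
  moreover have "a = prod_auto H K b c"
  proof (rule extensionalityI[of _ "carrier H \<times> carrier K"])
    show "a \<in> extensional (carrier H \<times> carrier K)"
      using a by (simp add: auto_iff_iso_extensional)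
    fix x assume "x \<in> carrier H \<times> carrier K"
    then obtain h k where x: "x = (h, k)" "h \<in> carrier H" "k \<in> carrier K" by blast
    then have "prod_auto H K b c x = (fst (a (h, \<one>\<^bsub>K\<^esub>)), snd (a (\<one>\<^bsub>H\<^esub>, k)))"
      by (simp add: prod_auto_def b_def c_def)
    then show "a x = prod_auto H K b c x"
      using DirProd_endo_eq_pair[OF H(1) K(1) coprime a_hom x(2,3)] x(1) by simp
  qed (simp add: prod_auto_def)
  ultimately show ?thesis by (rule that)
qed

lemma card_auto_DirProd_coprime:
  assumes "group H" "finite (carrier H)" "group K" "finite (carrier K)"
    and "coprime (order H) (order K)"
  shows "card (auto (H \<times>\<times> K)) = card (auto H) * card (auto K)"
proof -
  have "bij_betw (\<lambda>(b, c). prod_auto H K b c) (auto H \<times> auto K) (auto (H \<times>\<times> K))"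
    unfolding bij_betw_def
  proof
    show "inj_on (\<lambda>(b, c). prod_auto H K b c) (auto H \<times> auto K)"
      using assms by (simp add: inj_on_prod_auto)
    show "(\<lambda>(b, c). prod_auto H K b c) ` (auto H \<times> auto K) = auto (H \<times>\<times> K)"
    proof
      show "(\<lambda>(b, c). prod_auto H K b c) ` (auto H \<times> auto K) \<subseteq> auto (H \<times>\<times> K)"
        using assms by (auto intro: prod_auto_in_auto)
      show "auto (H \<times>\<times> K) \<subseteq> (\<lambda>(b, c). prod_auto H K b c) ` (auto H \<times> auto K)"
      proof
        fix a assume "a \<in> auto (H \<times>\<times> K)"
        then obtain b c where "b \<in> auto H" "c \<in> auto K" "a = prod_auto H K b c"
          by (rule auto_DirProd_coprime_eq_prod_auto[OF assms])
        then show "a \<in> (\<lambda>(b, c). prod_auto H K b c) ` (auto H \<times> auto K)"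
          by (intro image_eqI[of _ _ "(b, c)"]) simp_all
      qed
    qed
  qed
  then show ?thesis by (metis bij_betw_same_card card_cartesian_product)
qed

lemma aut_ratio_DirProd_coprime:
  assumes "group H" "finite (carrier H)" "group K" "finite (carrier K)"
    and "coprime (order H) (order K)"
  shows "aut_ratio (H \<times>\<times> K) = aut_ratio H * aut_ratio K"
  using card_auto_DirProd_coprime[OF assms] by (simp add: aut_ratio_def card_cartesian_product)

lemma DirProd_comm_group:
  assumes "comm_group G" "comm_group H"
  shows "comm_group (G \<times>\<times> H)"
proof -
  interpret G: comm_group G by fact
  interpret H: comm_group H by fact
  interpret GH: group "G \<times>\<times> H" by (rule DirProd_group) (simp_all add: G.is_group H.is_group)
  show ?thesis by (rule GH.group_comm_groupI) (auto simp: G.m_comm H.m_comm)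
qed

section \<open>Cyclic groups\<close>

definition nat_mod_group :: "nat \<Rightarrow> nat monoid" where
  "nat_mod_group n = \<lparr>carrier = {..<n}, mult = (\<lambda>x y. (x + y) mod n), one = 0\<rparr>"

lemma nat_mod_group_simps [simp]:
  "carrier (nat_mod_group n) = {..<n}"
  "x \<otimes>\<^bsub>nat_mod_group n\<^esub> y = (x + y) mod n"
  "\<one>\<^bsub>nat_mod_group n\<^esub> = 0"
  by (simp_all add: nat_mod_group_def)

lemma order_nat_mod_group: "order (nat_mod_group n) = n"
  by (simp add: order_def)

lemma comm_group_nat_mod_group:
  assumes "0 < n"
  shows "comm_group (nat_mod_group n)"
proof (rule comm_groupI)
  show "\<exists>y\<in>carrier (nat_mod_group n). y \<otimes>\<^bsub>nat_mod_group n\<^esub> x = \<one>\<^bsub>nat_mod_group n\<^esub>"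
    if "x \<in> carrier (nat_mod_group n)" for x
    using that assms by (intro bexI[of _ "(n - x) mod n"]) (auto simp: mod_add_left_eq)
qed (use assms in \<open>auto simp: mod_add_left_eq mod_add_right_eq ac_simps\<close>)

lemma card_coprime_lessThan: "card {a. a < n \<and> coprime a n} = totient n"
proof (cases "n = 1")
  case False
  then have "{a. a < n \<and> coprime a n} = totatives n"
    by (auto simp: in_totatives_iff order.order_iff_strict intro!: gr0I)
  then show ?thesis by (simp add: totient_def)
qed (simp add: Collect_conv_if)

text \<open>The generator is written \<open>1 mod n\<close> so that the trivial group \<open>n = 1\<close> is included.\<close>
lemma hom_nat_mod_group_eq_mult:
  assumes f: "f \<in> hom (nat_mod_group n) (nat_mod_group n)" and x: "x < n"
  shows "f x = x * f (1 mod n) mod n"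
  using x
proof (induction x)
  case 0
  then show ?case
    using hom_one[OF f] comm_group.axioms(2)[OF comm_group_nat_mod_group] by simp
next
  case (Suc x)
  then have "f (Suc x) = f (x \<otimes>\<^bsub>nat_mod_group n\<^esub> (1 mod n))"
    by simp
  also have "\<dots> = (f x + f (1 mod n)) mod n"
    using Suc.prems by (subst hom_mult[OF f]) simp_all
  also have "\<dots> = Suc x * f (1 mod n) mod n"
    using Suc by (simp add: mod_add_right_eq add.commute)
  finally show ?case .
qed

lemma mult_mod_in_auto_nat_mod_group:
  assumes n: "0 < n" and a: "coprime a n"
  shows "restrict (\<lambda>x. x * a mod n) {..<n} \<in> auto (nat_mod_group n)"
proof -
  let ?f = "restrict (\<lambda>x. x * a mod n) {..<n}"
  have hom: "?f \<in> hom (nat_mod_group n) (nat_mod_group n)"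
    by (auto intro!: homI simp: mod_mult_left_eq mod_add_eq distrib_right)
  have inj: "inj_on ?f {..<n}"
  proof (rule inj_onI)
    fix x y assume xy: "x \<in> {..<n}" "y \<in> {..<n}" "?f x = ?f y"
    then have "[x * a = y * a] (mod n)" by (simp add: cong_def)
    then have "[x = y] (mod n)" using a by (simp add: cong_mult_rcancel_nat)
    then show "x = y" using xy by (simp add: cong_def)
  qed
  have "?f ` {..<n} \<subseteq> {..<n}" using n by auto
  then have "bij_betw ?f {..<n} {..<n}"
    using endo_inj_surj[OF _ _ inj] inj by (simp add: bij_betw_def)
  then show ?thesis using hom by (simp add: auto_def Bij_def)
qed

lemma auto_nat_mod_group_eq_mult:
  assumes n: "0 < n" and f: "f \<in> auto (nat_mod_group n)"
  obtains a where "a < n" "coprime a n" "f = restrict (\<lambda>x. x * a mod n) {..<n}"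
proof -
  have f_hom: "f \<in> hom (nat_mod_group n) (nat_mod_group n)"
    and f_bij: "bij_betw f {..<n} {..<n}" and f_ext: "f \<in> extensional {..<n}"
    using f by (auto simp: auto_def Bij_def)
  define a where "a = f (1 mod n)"
  have f_eq: "f x = x * a mod n" if "x < n" for x
    unfolding a_def using f_hom that by (rule hom_nat_mod_group_eq_mult)
  have "a < n" using f_bij n by (auto simp: a_def bij_betw_def)
  moreover obtain x where "x < n" "f x = 1 mod n"
    using f_bij n by (metis bij_betw_iff_bijections lessThan_iff mod_less_divisor)
  then have "[a * x = Suc 0] (mod n)" by (simp add: f_eq cong_def mult.commute)
  then have "coprime a n" by (auto simp: coprime_iff_invertible_nat)
  moreover have "f = restrict (\<lambda>x. x * a mod n) {..<n}"
    by (rule extensionalityI[OF f_ext]) (simp_all add: f_eq)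
  ultimately show ?thesis by (rule that)
qed

lemma card_auto_nat_mod_group:
  assumes n: "0 < n"
  shows "card (auto (nat_mod_group n)) = totient n"
proof -
  define mult_by where "mult_by a = restrict (\<lambda>x. x * a mod n) {..<n}" for a
  define U where "U = {a. a < n \<and> coprime a n}"
  have "bij_betw mult_by U (auto (nat_mod_group n))"
    unfolding bij_betw_def
  proof
    show "inj_on mult_by U"
    proof (rule inj_onI)
      fix a b assume ab: "a \<in> U" "b \<in> U" and "mult_by a = mult_by b"
      define g where "g = 1 mod n"
      have "g < n" using n by (simp add: g_def)
      moreover have "g * c mod n = c" if "c < n" for c
        using that by (simp add: g_def mod_mult_left_eq[of 1 n, simplified])
      moreover have "mult_by a g = mult_by b g" using \<open>mult_by a = mult_by b\<close> by simp
      ultimately show "a = b" using ab by (simp add: mult_by_def U_def)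
    qed
    show "mult_by ` U = auto (nat_mod_group n)"
    proof
      show "mult_by ` U \<subseteq> auto (nat_mod_group n)"
        using mult_mod_in_auto_nat_mod_group[OF n] by (auto simp: mult_by_def U_def)
      show "auto (nat_mod_group n) \<subseteq> mult_by ` U"
      proof
        fix f assume "f \<in> auto (nat_mod_group n)"
        then obtain a where "a < n" "coprime a n" "f = mult_by a"
          unfolding mult_by_def by (rule auto_nat_mod_group_eq_mult[OF n])
        then show "f \<in> mult_by ` U" by (simp add: U_def)
      qed
    qed
  qed
  then show ?thesis by (metis bij_betw_same_card card_coprime_lessThan U_def)
qed

lemma aut_ratio_nat_mod_group:
  "0 < n \<Longrightarrow> aut_ratio (nat_mod_group n) = totient n / n"
  by (simp add: aut_ratio_def card_auto_nat_mod_group)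

section \<open>Elementary abelian 2-groups\<close>

definition symdiff_group :: "nat \<Rightarrow> nat set monoid" where
  "symdiff_group k = \<lparr>carrier = Pow {..<k}, mult = (\<lambda>S T. (S - T) \<union> (T - S)), one = {}\<rparr>"

lemma symdiff_group_simps [simp]:
  "carrier (symdiff_group k) = Pow {..<k}"
  "S \<otimes>\<^bsub>symdiff_group k\<^esub> T = (S - T) \<union> (T - S)"
  "\<one>\<^bsub>symdiff_group k\<^esub> = {}"
  by (simp_all add: symdiff_group_def)

lemma comm_group_symdiff_group: "comm_group (symdiff_group k)"
proof (rule comm_groupI)
  show "\<exists>T\<in>carrier (symdiff_group k). T \<otimes>\<^bsub>symdiff_group k\<^esub> S = \<one>\<^bsub>symdiff_group k\<^esub>"
    if "S \<in> carrier (symdiff_group k)" for S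
    using that by (intro bexI[of _ S]) auto
qed auto

lemma order_symdiff_group: "order (symdiff_group k) = 2 ^ k"
  by (simp add: order_def card_Pow)

lemma fact_le_card_auto_symdiff_group: "fact k \<le> card (auto (symdiff_group k))"
proof -
  define A where "A = {..<k}"
  define perm_auto where "perm_auto p = restrict (image p) (Pow A)" for p :: "nat \<Rightarrow> nat"
  have "finite (auto (symdiff_group k))"
  proof (rule finite_subset)
    show "auto (symdiff_group k) \<subseteq> Pow A \<rightarrow>\<^sub>E Pow A"
      by (auto simp: auto_def Bij_def hom_def PiE_def A_def)
  qed (simp add: A_def finite_PiE)
  moreover have "perm_auto ` {p. p permutes A} \<subseteq> auto (symdiff_group k)"
  proof clarify
    fix p assume p: "p permutes A"
    then have bij: "bij_betw p A A" and "inj p" by (simp_all add: permutes_imp_bij permutes_inj)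
    then have "perm_auto p \<in> hom (symdiff_group k) (symdiff_group k)"
      by (auto simp: perm_auto_def A_def hom_def bij_betw_def image_Un image_set_diff)
    moreover have "bij_betw (perm_auto p) (Pow A) (Pow A)"
      using bij_betw_image_Pow[OF bij] by (rule bij_betw_cong[THEN iffD1, rotated]) (simp add: perm_auto_def)
    ultimately show "perm_auto p \<in> auto (symdiff_group k)"
      by (simp add: auto_def Bij_def perm_auto_def A_def)
  qed
  moreover have "inj_on perm_auto {p. p permutes A}"
  proof (rule inj_onI)
    fix p q assume pq: "p \<in> {p. p permutes A}" "q \<in> {p. p permutes A}" and eq: "perm_auto p = perm_auto q"
    show "p = q"
    proof
      fix i show "p i = q i"
      proof (cases "i \<in> A")
        case True
        then show ?thesis using fun_cong[OF eq, of "{i}"] by (simp add: perm_auto_def)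
      qed (use pq in \<open>simp add: permutes_not_in\<close>)
    qed
  qed
  ultimately have "card {p. p permutes A} \<le> card (auto (symdiff_group k))"
    by (intro card_inj_on_le)
  then show ?thesis by (simp add: card_permutations A_def)
qed

lemma aut_ratio_symdiff_group_ge: "fact k / 2 ^ k \<le> aut_ratio (symdiff_group k)"
proof -
  have "real (fact k) \<le> real (card (auto (symdiff_group k)))"
    using fact_le_card_auto_symdiff_group[of k] by (rule of_nat_mono)
  then have "fact k / 2 ^ k \<le> real (card (auto (symdiff_group k))) / 2 ^ k"
    by (intro divide_right_mono) simp_all
  then show ?thesis by (simp add: aut_ratio_def card_Pow)
qed

lemma exists_fact_div_power_gt: "\<exists>k. (x :: real) < fact k / 2 ^ k"
proof (cases "0 < x")
  case True
  have lim: "(\<lambda>k. 2 ^ k / fact k :: real) \<longlonglongrightarrow> 0"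
    using summable_LIMSEQ_zero[OF summable_exp[of "2 :: real"]] by (simp add: divide_inverse mult.commute)
  have "\<forall>\<^sub>F k in sequentially. 2 ^ k / fact k < 1 / x"
    using order_tendstoD(2)[OF lim, of "1 / x"] True by simp
  then obtain k where "2 ^ k / fact k < 1 / x"
    unfolding eventually_sequentially by blast
  then show ?thesis using True by (auto simp: field_simps)
next
  case False
  then show ?thesis by (intro exI[of _ 0]) simp
qed

section \<open>Density of the totient ratios\<close>

lemma prod_prime_powers_multiplicity:
  fixes n :: nat
  assumes "finite P" "\<forall>p\<in>P. prime p" "prime_factors n \<subseteq> P" "0 < n"
  shows "(\<Prod>p\<in>P. p ^ multiplicity p n) = n"
proof -
  have "(\<Prod>p\<in>P. p ^ multiplicity p n) = (\<Prod>p\<in>prime_factors n. p ^ multiplicity p n)"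
    using assms by (intro prod.mono_neutral_right) (auto simp: prime_factors_multiplicity)
  also have "\<dots> = n" using prime_factorization_nat[OF \<open>0 < n\<close>] by simp
  finally show ?thesis .
qed

lemma multiplicity_less_self:
  fixes n p :: nat
  assumes "prime p" "0 < n"
  shows "multiplicity p n < n"
proof -
  have "multiplicity p n < 2 ^ multiplicity p n" by (rule less_exp)
  also have "\<dots> \<le> p ^ multiplicity p n" using prime_ge_2_nat[OF assms(1)] by (simp add: power_mono)
  also have "\<dots> \<le> n" using assms(2) by (intro dvd_imp_le multiplicity_dvd)
  finally show ?thesis .
qed

lemma inj_on_multiplicities:
  assumes "finite P" "\<forall>p\<in>P. prime p"
  shows "inj_on (\<lambda>n :: nat. restrict (\<lambda>p. multiplicity p n) P) {n. 0 < n \<and> prime_factors n \<subseteq> P}"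
proof (rule inj_onI)
  fix m n :: nat
  assume m: "m \<in> {n. 0 < n \<and> prime_factors n \<subseteq> P}"
    and n: "n \<in> {n. 0 < n \<and> prime_factors n \<subseteq> P}"
    and eq: "restrict (\<lambda>p. multiplicity p m) P = restrict (\<lambda>p. multiplicity p n) P"
  have "multiplicity p m = multiplicity p n" if "p \<in> P" for p
    using fun_cong[OF eq, of p] that by simp
  then have "(\<Prod>p\<in>P. p ^ multiplicity p m) = (\<Prod>p\<in>P. p ^ multiplicity p n)"
    by simp
  then show "m = n"
    using prod_prime_powers_multiplicity[OF assms] m n by simp
qed

text \<open>Euler's argument: expanding the product of geometric series over the primes up to \<open>N\<close>
  produces every \<open>1/n\<close> with \<open>n \<le> N\<close>, by unique factorisation.\<close>
lemma harm_le_Euler_product: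
  "harm N \<le> (\<Prod>p | prime p \<and> p \<le> N. 1 / (1 - 1 / real p))"
proof -
  define P where "P = {p. prime p \<and> p \<le> N}"
  have P: "finite P" "\<forall>p\<in>P. prime p" by (simp_all add: P_def)
  define exps where "exps n = restrict (\<lambda>p. multiplicity p n) P" for n :: nat
  have factors: "prime_factors n \<subseteq> P" if "n \<in> {1..N}" for n
    using that by (auto simp: P_def in_prime_factors_iff intro: order.trans[OF dvd_imp_le])
  have inverse_eq: "(\<Prod>p\<in>P. (1 / real p) ^ exps n p) = 1 / real n" if n: "n \<in> {1..N}" for n
  proof -
    have "(\<Prod>p\<in>P. (1 / real p) ^ exps n p) = 1 / real (\<Prod>p\<in>P. p ^ multiplicity p n)"
      by (simp add: exps_def power_one_over prod_dividef)
    also have "\<dots> = 1 / real n"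
      using n by (subst prod_prime_powers_multiplicity[OF P factors[OF n]]) auto
    finally show ?thesis .
  qed
  have "{1..N} \<subseteq> {n. 0 < n \<and> prime_factors n \<subseteq> P}"
  proof
    fix n assume n: "n \<in> {1..N}"
    from factors[OF n] n show "n \<in> {n. 0 < n \<and> prime_factors n \<subseteq> P}" by simp
  qed
  then have inj: "inj_on exps {1..N}"
    unfolding exps_def by (rule inj_on_subset[OF inj_on_multiplicities[OF P]])
  have range: "exps ` {1..N} \<subseteq> P \<rightarrow>\<^sub>E {..N}"
  proof clarify
    fix n assume n: "n \<in> {1..N}"
    have "multiplicity p n < n" if "p \<in> P" for p
      using P(2) that n by (intro multiplicity_less_self) auto
    then show "exps n \<in> P \<rightarrow>\<^sub>E {..N}" using n by (fastforce simp: exps_def)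
  qed
  have geometric: "(\<Sum>e\<le>N. (1 / real p) ^ e) \<le> 1 / (1 - 1 / real p)" if "p \<in> P" for p
  proof -
    have "2 \<le> p" using P(2) that by (simp add: prime_ge_2_nat)
    then have "norm (1 / real p) < 1" by simp
    from sum_le_suminf[OF summable_geometric[OF this]] suminf_geometric[OF this]
    show ?thesis by auto
  qed
  have "harm N = (\<Sum>n=1..N. 1 / real n)"
    by (simp add: harm_def divide_inverse)
  also have "\<dots> = (\<Sum>n=1..N. \<Prod>p\<in>P. (1 / real p) ^ exps n p)"
    by (rule sum.cong[OF refl]) (rule inverse_eq[symmetric])
  also have "\<dots> = (\<Sum>g\<in>exps ` {1..N}. \<Prod>p\<in>P. (1 / real p) ^ g p)"
    using inj by (simp add: sum.reindex)
  also have "\<dots> \<le> (\<Sum>g\<in>P \<rightarrow>\<^sub>E {..N}. \<Prod>p\<in>P. (1 / real p) ^ g p)"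
    using range P by (intro sum_mono2) (simp_all add: finite_PiE prod_nonneg)
  also have "\<dots> = (\<Prod>p\<in>P. \<Sum>e\<le>N. (1 / real p) ^ e)"
    using P by (simp add: prod_sum_PiE)
  also have "\<dots> \<le> (\<Prod>p\<in>P. 1 / (1 - 1 / real p))"
    using geometric by (intro prod_mono) (auto intro: sum_nonneg)
  finally show ?thesis by (simp add: P_def)
qed

lemma prod_primes_one_minus_inverse_tendsto_0:
  "(\<lambda>N. \<Prod>p | prime p \<and> p \<le> N. 1 - 1 / real p) \<longlonglongrightarrow> 0"
proof (rule tendsto_sandwich)
  have "0 \<le> 1 - 1 / real p" if "prime p" for p
    using prime_gt_0_nat[OF that] by (simp add: field_simps)
  then show "\<forall>\<^sub>F N in sequentially. 0 \<le> (\<Prod>p | prime p \<and> p \<le> N. 1 - 1 / real p)"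
    by (intro always_eventually allI prod_nonneg) simp
  show "\<forall>\<^sub>F N in sequentially. (\<Prod>p | prime p \<and> p \<le> N. 1 - 1 / real p) \<le> inverse (harm N)"
  proof (rule eventually_sequentiallyI)
    fix N :: nat assume "1 \<le> N"
    then have "0 < (harm N :: real)" by simp
    moreover have "0 < (\<Prod>p | prime p \<and> p \<le> N. 1 - 1 / real p)"
      by (auto intro!: prod_pos dest: prime_ge_2_nat simp: field_simps)
    ultimately show "(\<Prod>p | prime p \<and> p \<le> N. 1 - 1 / real p) \<le> inverse (harm N)"
      using harm_le_Euler_product[of N] by (simp add: prod_dividef field_simps)
  qed
  show "(\<lambda>N. inverse (harm N) :: real) \<longlonglongrightarrow> 0"
    using tendsto_inverse_0_at_top[OF harm_at_top] .
qed simp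

lemma prod_primes_above_one_minus_inverse_tendsto_0:
  "(\<lambda>N. \<Prod>p | prime p \<and> M < p \<and> p \<le> N. 1 - 1 / real p) \<longlonglongrightarrow> 0"
proof -
  define Q where "Q N = (\<Prod>p | prime p \<and> p \<le> N. 1 - 1 / real p)" for N
  have "0 < Q M" unfolding Q_def by (auto intro!: prod_pos dest: prime_ge_2_nat simp: field_simps)
  have "Q M * (\<Prod>p | prime p \<and> M < p \<and> p \<le> N. 1 - 1 / real p) = Q N" if "M \<le> N" for N
  proof -
    have "{p. prime p \<and> p \<le> N} = {p. prime p \<and> p \<le> M} \<union> {p. prime p \<and> M < p \<and> p \<le> N}"
      using that by auto
    moreover have "Q M * (\<Prod>p | prime p \<and> M < p \<and> p \<le> N. 1 - 1 / real p) =
        (\<Prod>p\<in>{p. prime p \<and> p \<le> M} \<union> {p. prime p \<and> M < p \<and> p \<le> N}. 1 - 1 / real p)"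
      unfolding Q_def by (rule prod.union_disjoint[symmetric]) auto
    ultimately show ?thesis by (simp add: Q_def)
  qed
  then have "\<forall>\<^sub>F N in sequentially. Q N / Q M = (\<Prod>p | prime p \<and> M < p \<and> p \<le> N. 1 - 1 / real p)"
    using \<open>0 < Q M\<close> by (intro eventually_sequentiallyI[of M]) (auto simp: field_simps)
  moreover have "(\<lambda>N. Q N / Q M) \<longlonglongrightarrow> 0 / Q M"
    unfolding Q_def by (intro tendsto_divide prod_primes_one_minus_inverse_tendsto_0 tendsto_const)
      (use \<open>0 < Q M\<close> in simp)
  ultimately show ?thesis by (simp add: Lim_transform_eventually)
qed

lemma totient_prod_primes_ratio:
  assumes "finite S" "\<forall>p\<in>S. prime p"
  shows "real (totient (\<Prod>S)) / real (\<Prod>S) = (\<Prod>p\<in>S. 1 - 1 / real p)"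
proof -
  have "prime_factors (\<Prod>S) = (\<Union>p\<in>S. prime_factors p)"
    using assms by (subst prime_factors_prod) (auto dest: prime_gt_0_nat)
  also have "\<dots> = S"
    using assms(2) by (auto simp: prime_prime_factors)
  finally have "prime_factors (\<Prod>S) = S" .
  moreover have "0 < \<Prod>S" using assms by (auto intro!: prod_pos dest: prime_gt_0_nat)
  ultimately show ?thesis by (simp add: totient_formula2 del: of_nat_prod)
qed

lemma hits_interval_if_small_drops:
  fixes s :: "nat \<Rightarrow> real"
  assumes "t < s 0" "s N \<le> t" and drop: "\<And>n. s n - s (Suc n) < \<delta>"
  shows "\<exists>n. t - \<delta> < s n \<and> s n \<le> t"
proof -
  define m where "m = (LEAST n. s n \<le> t)"
  have "s m \<le> t" unfolding m_def by (rule LeastI[of _ N]) (rule assms(2))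
  moreover have "m \<noteq> 0" using \<open>s m \<le> t\<close> assms(1) by (intro notI) simp
  then obtain k where k: "m = Suc k" using not0_implies_Suc by blast
  then have "t < s k" using not_less_Least[of k "\<lambda>n. s n \<le> t"] by (simp add: m_def)
  ultimately show ?thesis using drop[of k] k by (intro exI[of _ m]) simp
qed

lemma totient_ratio_approx_odd:
  fixes t \<epsilon> :: real
  assumes t: "0 < t" "t < 1" and \<epsilon>: "0 < \<epsilon>"
  shows "\<exists>n. odd n \<and> \<bar>totient n / n - t\<bar> < \<epsilon>"
proof -
  obtain M :: nat where "max 2 (1 / \<epsilon>) < M"
    using reals_Archimedean2 by blast
  then have M: "2 \<le> M" "1 / \<epsilon> < M" by simp_all
  define P where "P N = {p. prime p \<and> M < p \<and> p \<le> N}" for N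
  define s where "s N = (\<Prod>p\<in>P N. 1 - 1 / real p)" for N
  have P: "finite (P N)" "\<forall>p\<in>P N. prime p" for N by (simp_all add: P_def)
  have factor: "0 \<le> 1 - 1 / real p" "1 - 1 / real p \<le> 1" if "prime p" for p
    using prime_ge_2_nat[OF that] by (simp_all add: field_simps)
  have s_bounds: "0 \<le> s N" "s N \<le> 1" for N
    using factor by (auto simp: s_def P_def intro: prod_nonneg prod_le_1)
  have "t < s 0" using t by (simp add: s_def P_def)
  moreover have "s N - s (Suc N) < \<epsilon>" for N
  proof (cases "Suc N \<in> P (Suc N)")
    case True
    then have "P (Suc N) = insert (Suc N) (P N)" "Suc N \<notin> P N" "M < Suc N"
      by (auto simp: P_def)
    then have "s N - s (Suc N) = s N / Suc N" by (simp add: s_def P field_simps)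
    also have "\<dots> \<le> 1 / M" using s_bounds[of N] \<open>M < Suc N\<close> M(1)
      by (intro frac_le) simp_all
    also have "\<dots> < \<epsilon>" using M \<epsilon> by (simp add: field_simps)
    finally show ?thesis .
  next
    case False
    then have "P (Suc N) = P N" by (auto simp: P_def le_Suc_eq)
    then show ?thesis using \<epsilon> by (simp add: s_def)
  qed
  moreover obtain N where "s N \<le> t"
  proof -
    have "\<forall>\<^sub>F N in sequentially. s N < t"
      using order_tendstoD(2)[OF prod_primes_above_one_minus_inverse_tendsto_0 t(1)]
      by (simp add: s_def P_def)
    then show ?thesis unfolding eventually_sequentially by (meson order_refl less_imp_le that)
  qed
  ultimately obtain N where N: "t - \<epsilon> < s N" "s N \<le> t"
    using hits_interval_if_small_drops by blast
  have "odd p" if "p \<in> P N" for p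
    using that M(1) by (intro prime_odd_nat) (auto simp: P_def)
  then have "odd (\<Prod>(P N))" using P(1) by (auto simp: even_prod_iff)
  moreover have "totient (\<Prod>(P N)) / \<Prod>(P N) = s N"
    unfolding s_def by (rule totient_prod_primes_ratio[OF P])
  ultimately show ?thesis using N \<epsilon> by (intro exI[of _ "\<Prod>(P N)"]) simp
qed

section \<open>Density of the automorphism ratios\<close>

lemma aut_ratio_approx:
  fixes x \<epsilon> :: real
  assumes x: "0 < x" and \<epsilon>: "0 < \<epsilon>"
  shows "\<exists>G :: nat monoid. comm_group G \<and> finite (carrier G) \<and> \<bar>aut_ratio G - x\<bar> < \<epsilon>"
proof -
  obtain k where "x < fact k / 2 ^ k" using exists_fact_div_power_gt by blast
  define L where "L = aut_ratio (symdiff_group k)"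
  have L: "x < L" "0 < L"
    using \<open>x < _\<close> aut_ratio_symdiff_group_ge[of k] x by (simp_all add: L_def)
  obtain n where n: "odd n" "\<bar>totient n / n - x / L\<bar> < \<epsilon> / L"
    using totient_ratio_approx_odd[of "x / L" "\<epsilon> / L"] x \<epsilon> L by auto
  then have "0 < n" by (simp add: odd_pos)
  define G where "G = symdiff_group k \<times>\<times> nat_mod_group n"
  have groups: "comm_group (symdiff_group k)" "comm_group (nat_mod_group n)"
    using comm_group_symdiff_group comm_group_nat_mod_group[OF \<open>0 < n\<close>] .
  have "coprime (order (symdiff_group k)) (order (nat_mod_group n))"
    using n(1) by (simp add: order_symdiff_group order_nat_mod_group)
  then have "aut_ratio G = L * (totient n / n)"
    using aut_ratio_DirProd_coprime[OF comm_group.axioms(2)[OF groups(1)] _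
        comm_group.axioms(2)[OF groups(2)]] aut_ratio_nat_mod_group[OF \<open>0 < n\<close>]
    by (simp add: G_def L_def)
  then have "aut_ratio G - x = L * (totient n / n - x / L)"
    using L by (simp add: field_simps)
  then have "\<bar>aut_ratio G - x\<bar> = L * \<bar>totient n / n - x / L\<bar>"
    using L by (simp add: abs_mult)
  also have "\<dots> < \<epsilon>" using n(2) L by (simp add: field_simps)
  finally have "\<bar>aut_ratio G - x\<bar> < \<epsilon>" .
  moreover have "comm_group G" "finite (carrier G)"
    using groups by (simp_all add: G_def DirProd_comm_group)
  ultimately show ?thesis using ex_nat_group_same_aut_ratio[of G] by auto
qed

theorem theorem1p1:
  shows "{0::real..} \<subseteq>
    closure {aut_ratio G | G :: nat monoid. comm_group G \<and> finite (carrier G)}"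
proof -
  let ?R = "{aut_ratio G | G :: nat monoid. comm_group G \<and> finite (carrier G)}"
  have "{0<..} \<subseteq> closure ?R"
  proof
    fix x :: real assume "x \<in> {0<..}"
    then have "\<exists>y\<in>?R. \<bar>y - x\<bar> < \<epsilon>" if "0 < \<epsilon>" for \<epsilon>
      using aut_ratio_approx[of x \<epsilon>] that by auto
    then show "x \<in> closure ?R" by (simp add: closure_approachable dist_real_def)
  qed
  then have "closure {0<..} \<subseteq> closure ?R" by (rule closure_minimal) simp
  then show ?thesis by simp
qed

end
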